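(* Let $w$ be a perfectly clustering word over a totally ordered alphabet, and let $a_1\pi_1a_2\pi_2\cdots\pi_{k-1}a_k$ be the palindromic special factorization of the Lyndon conjugate of $w$. Then for any two consecutive rows of the Burrows–Wheeler matrix of $w$, viewed as words $w'$ (upper row) and $w''$ (next row), there exist words $x,y,m$ such that $w'=ymx$, $w''=y\tilde m x$, and $xy\in\{\pi_1,\dots,\pi_{k-1}\}$.
   Context: $\tilde m$ denotes the reversal of the word $m$. A special factorization of a word $v$ is a factorization $v=a_1\pi_1a_2\cdots\pi_{k-1}a_k$ where the set of letters occurring in $v$ is $\{a_1<\cdots<a_k\}$ and $\pi_1,\dots,\pi_{k-1}$ are words; it is palindromic if every $\pi_i$ is a palindrome. Lexicographic order: a proper prefix is smaller. A Lyndon word is a primitive word strictly smaller than its other conjugates. For a primitive word $v$ of length $n$ with conjugates $v_1<\cdots<v_n$, $\mathrm{bw}(v)$ is the word formed by the last letters of $v_1,\dots,v_n$; $v$ is perfectly clustering if it is primitive and $\mathrm{bw}(v)$ is weakly decreasing. The Burrows–Wheeler matrix of $v$ has as rows the conjugates $v_1,\dots,v_n$ in this order. The Lyndon conjugate of a perfectly clustering word is perfectly clustering and has a unique palindromic special factorization. *)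

theory Defs
  imports Main "HOL-Library.List_Lexorder"
begin

text \<open>Words are lists over a totally ordered alphabet. The order on words is the
lexicographic order of HOL-Library.List_Lexorder, in which a proper prefix is smaller.\<close>

definition primitive :: "'a list \<Rightarrow> bool" where
  "primitive v \<longleftrightarrow> v \<noteq> [] \<and> \<not> (\<exists>u k. 2 \<le> k \<and> v = concat (replicate k u))"

definition conjugates :: "'a list \<Rightarrow> 'a list set" where
  "conjugates v = {rotate i v | i. i < length v}"

definition lyndon :: "'a::linorder list \<Rightarrow> bool" where
  "lyndon v \<longleftrightarrow> primitive v \<and> (\<forall>u \<in> conjugates v. u \<noteq> v \<longrightarrow> v < u)"

text \<open>Rows of the Burrows-Wheeler matrix: the conjugates in increasing order
(for a primitive word they are pairwise distinct).\<close>
definition bw_matrix :: "'a::linorder list \<Rightarrow> 'a list list" where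
  "bw_matrix v = sorted_list_of_set (conjugates v)"

definition bw :: "'a::linorder list \<Rightarrow> 'a list" where
  "bw v = map last (bw_matrix v)"

definition perfectly_clustering :: "'a::linorder list \<Rightarrow> bool" where
  "perfectly_clustering v \<longleftrightarrow> primitive v \<and> sorted_wrt (\<ge>) (bw v)"

text \<open>Given letters a1..ak and words p1..p(k-1), build a1 p1 a2 ... p(k-1) ak.\<close>
fun interleave :: "'a list \<Rightarrow> 'a list list \<Rightarrow> 'a list" where
  "interleave [] ps = []"
| "interleave (a # as) ps = a # concat (map2 (\<lambda>p b. p @ [b]) ps as)"

definition special_factorization :: "'a::linorder list \<Rightarrow> 'a list list \<Rightarrow> bool" where
  "special_factorization v ps \<longleftrightarrow>
     length ps + 1 = card (set v) \<and> v = interleave (sorted_list_of_set (set v)) ps"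

definition palindromic_special_factorization :: "'a::linorder list \<Rightarrow> 'a list list \<Rightarrow> bool" where
  "palindromic_special_factorization v ps \<longleftrightarrow>
     special_factorization v ps \<and> (\<forall>p \<in> set ps. rev p = p)"

end

theory Submission
  imports Defs "HOL-Library.Multiset" "HOL-Library.Sublist"
begin

text \<open>For a perfectly clustering word the last column of the Burrows-Wheeler matrix is the
  reversed first column, and the LF-mapping propagates this to all columns: row \<open>n - 1 - j\<close> is
  the reversal of row \<open>j\<close>. Perfect clustering also forces every row lying between two rows with
  a common suffix to share that suffix, so two consecutive rows stay consecutive when their
  common prefix is rotated to the end. Rotated in this way, they start with different letters,
  so they are the last row starting with \<open>a\<^sub>i\<close> and the first row starting with \<open>a\<^sub>i\<^sub>+\<^sub>1\<close>.
  These two rows lie between the rotations of \<open>l\<close> and of its mirror image that end with the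
  palindrome \<open>\<pi>\<^sub>i\<close>, hence both end with \<open>\<pi>\<^sub>i\<close>; counting consecutive pairs shows that they
  share no longer suffix, and the symmetry under reversal then forces them to be \<open>m \<pi>\<^sub>i\<close> and
  \<open>rev m \<pi>\<^sub>i\<close>.\<close>

lemma append_less_append_same_length_iff:
  fixes xs ys :: "'a::linorder list"
  shows "length xs = length ys \<Longrightarrow> xs @ us < ys @ vs \<longleftrightarrow> xs < ys \<or> xs = ys \<and> us < vs"
proof (induction xs arbitrary: ys)
  case (Cons x xs)
  then show ?case by (cases ys) auto
qed simp

lemma append_le_append_same_length_iff:
  fixes xs ys :: "'a::linorder list"
  shows "length xs = length ys \<Longrightarrow> xs @ us \<le> ys @ vs \<longleftrightarrow> xs < ys \<or> xs = ys \<and> us \<le> vs"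
proof (induction xs arbitrary: ys)
  case (Cons x xs)
  then show ?case by (cases ys) auto
qed simp

lemma append_less_append_cancel_left: "zs @ xs < zs @ ys \<longleftrightarrow> xs < ys"
  for xs ys :: "'a::linorder list"
  by (induction zs) auto

lemma append_le_append_cancel_left: "zs @ xs \<le> zs @ ys \<longleftrightarrow> xs \<le> ys"
  for xs ys :: "'a::linorder list"
  by (induction zs) auto

lemma hd_le_hd_if_le: "xs \<noteq> [] \<Longrightarrow> ys \<noteq> [] \<Longrightarrow> xs \<le> ys \<Longrightarrow> hd xs \<le> hd ys"
  for xs ys :: "'a::linorder list"
  by (cases xs; cases ys) auto

lemma less_if_hd_less: "xs \<noteq> [] \<Longrightarrow> ys \<noteq> [] \<Longrightarrow> hd xs < hd ys \<Longrightarrow> xs < ys"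
  for xs ys :: "'a::linorder list"
  by (cases xs; cases ys) auto

lemma prefix_if_between: "p @ xs \<le> z \<Longrightarrow> z \<le> p @ ys \<Longrightarrow> prefix p z"
  for z :: "'a::linorder list"
proof (induction p arbitrary: z)
  case (Cons c p)
  then obtain z' where "z = c # z'" by (cases z) auto
  with Cons show ?case by auto
qed simp

lemma sorted_wrt_less_nth_less_iff:
  fixes xs :: "'a::linorder list"
  assumes "sorted_wrt (<) xs" "i < length xs" "j < length xs"
  shows "xs ! i < xs ! j \<longleftrightarrow> i < j"
  using assms by (metis linorder_neqE_nat order_less_asym sorted_wrt_nth_less)

lemma rotate1_less_rotate1_iff:
  fixes u v :: "'a::linorder list"
  assumes "u \<noteq> []" "v \<noteq> []" "length u = length v" "hd u = hd v"
  shows "rotate1 u < rotate1 v \<longleftrightarrow> u < v"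
  using assms
  by (cases u; cases v) (auto simp: append_less_append_same_length_iff)

lemma last_rotate1: "u \<noteq> [] \<Longrightarrow> last (rotate1 u) = hd u"
  by (cases u) auto

lemma rotate_in_conjugates: "v \<noteq> [] \<Longrightarrow> rotate i v \<in> conjugates v"
  unfolding conjugates_def by (metis (mono_tags, lifting) length_greater_0_conv mem_Collect_eq
      mod_less_divisor rotate_conv_mod)

lemma conjugates_eq_range_rotate: "v \<noteq> [] \<Longrightarrow> conjugates v = range (\<lambda>i. rotate i v)"
  using rotate_in_conjugates unfolding conjugates_def by blast

lemma interleave_infix:
  assumes "length ps = length as" "i < length ps"
  shows "\<exists>\<alpha> \<beta>. interleave (a # as) ps = \<alpha> @ [(a # as) ! i] @ ps ! i @ [(a # as) ! Suc i] @ \<beta>"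
  using assms
proof (induction ps arbitrary: a as i)
  case (Cons p ps)
  then obtain b bs where as: "as = b # bs" by (cases as) auto
  have interleave: "interleave (a # as) (p # ps) = a # p @ interleave (b # bs) ps"
    using as by simp
  show ?case
  proof (cases i)
    case 0
    then show ?thesis
      using interleave as
      by (metis append_Cons append_Nil interleave.simps(2) nth_Cons_0 nth_Cons_Suc)
  next
    case (Suc i')
    then obtain \<alpha> \<beta>
      where "interleave (b # bs) ps = \<alpha> @ [(b # bs) ! i'] @ ps ! i' @ [(b # bs) ! Suc i'] @ \<beta>"
      using Cons as by fastforce
    then have "interleave (a # as) (p # ps)
      = (a # p @ \<alpha>) @ [(a # as) ! i] @ (p # ps) ! i @ [(a # as) ! Suc i] @ \<beta>"
      using interleave as Suc by simp
    then show ?thesis by blast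
  qed
qed simp

lemma length_interleave:
  "length ps = length as \<Longrightarrow>
    length (interleave (a # as) ps) = Suc (\<Sum>i<length ps. Suc (length (ps ! i)))"
proof (induction ps arbitrary: a as)
  case (Cons p ps)
  then obtain b bs where as: "as = b # bs" by (cases as) auto
  have "length (interleave (a # as) (p # ps)) = Suc (length p) + length (interleave (b # bs) ps)"
    using as by simp
  also have "\<dots> = Suc (\<Sum>i<length (p # ps). Suc (length ((p # ps) ! i)))"
    using Cons as by (simp only: length_Cons sum.lessThan_Suc_shift nth_Cons_0 nth_Cons_Suc)
  finally show ?case .
qed simp

lemma split_mirrored_factors:
  assumes y1: "y1 @ x = m @ p" and y2: "y2 @ x = rev m @ p" and "hd m \<noteq> last m"
  obtains x0 where "y1 = m @ x0" "y2 = rev m @ x0" "p = x0 @ x"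
proof (cases "length x \<le> length p")
  case True
  with y1 obtain x0 where "y1 = m @ x0" "p = x0 @ x"
    by (auto simp: append_eq_append_conv2)
  with y2 that show thesis by simp
next
  case False
  with y1 obtain us where us: "m = y1 @ us" "x = us @ p" "us \<noteq> []"
    by (auto simp: append_eq_append_conv2)
  with y2 have "rev m = y2 @ us" by simp
  then have "hd m = last us" by (metis last_appendR last_rev us(3))
  with us \<open>hd m \<noteq> last m\<close> show thesis by simp
qed

locale perfectly_clustering_word =
  fixes w :: "'a::linorder list"
  assumes perfectly_clustering: "perfectly_clustering w"
begin

abbreviation C :: "'a list set" where "C \<equiv> conjugates w"

abbreviation M :: "'a list list" where "M \<equiv> bw_matrix w"

lemma w_not_Nil: "w \<noteq> []"
  using perfectly_clustering unfolding perfectly_clustering_def primitive_def by auto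

lemma conjugates_iff: "u \<in> C \<longleftrightarrow> (\<exists>i. u = rotate i w)"
  using conjugates_eq_range_rotate[OF w_not_Nil] by auto

lemma w_in_C: "w \<in> C"
  using conjugates_iff by (metis rotate0 id_apply)

lemma rotate_in_C: "u \<in> C \<Longrightarrow> rotate i u \<in> C"
  by (auto simp: conjugates_iff rotate_rotate)

lemma rotate1_in_C: "u \<in> C \<Longrightarrow> rotate1 u \<in> C"
  using rotate_in_C[of u 1] by simp

lemma swap_in_C: "xs @ ys \<in> C \<Longrightarrow> ys @ xs \<in> C"
  by (metis rotate_in_C rotate_append)

lemma length_conjugate: "u \<in> C \<Longrightarrow> length u = length w"
  by (auto simp: conjugates_iff)

lemma conjugate_not_Nil: "u \<in> C \<Longrightarrow> u \<noteq> []"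
  using length_conjugate w_not_Nil by fastforce

lemma set_conjugate: "u \<in> C \<Longrightarrow> set u = set w"
  by (auto simp: conjugates_iff)

lemma finite_C: "finite C"
  unfolding conjugates_def by simp

lemma card_C_le: "card C \<le> length w"
proof -
  have "C = (\<lambda>i. rotate i w) ` {..<length w}"
    unfolding conjugates_def by auto
  then show ?thesis
    by (metis card_image_le card_lessThan finite_lessThan)
qed

lemma rotate1_image_C: "rotate1 ` C = C"
proof
  show "C \<subseteq> rotate1 ` C"
  proof
    fix u assume "u \<in> C"
    then have "rotate1 (rotate (length w - 1) u) = rotate (length u) u"
      using length_conjugate w_not_Nil by (simp flip: rotate_Suc)
    then have "rotate1 (rotate (length w - 1) u) = u" by simp
    then show "u \<in> rotate1 ` C" using rotate_in_C[OF \<open>u \<in> C\<close>] by (metis image_eqI)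
  qed
qed (use rotate1_in_C in blast)

lemma exists_conjugate_with_hd: "c \<in> set w \<Longrightarrow> \<exists>u\<in>C. hd u = c"
proof -
  assume "c \<in> set w"
  then obtain p q where "w = p @ c # q" by (meson split_list)
  then have "p @ (c # q) \<in> C" using w_in_C by simp
  then have "(c # q) @ p \<in> C" by (rule swap_in_C)
  then show ?thesis by force
qed

lemma sorted_rows: "sorted_wrt (<) M"
  unfolding bw_matrix_def by simp

lemma set_rows: "set M = C"
  unfolding bw_matrix_def using finite_C by simp

lemma distinct_rows: "distinct M"
  using sorted_rows strict_sorted_iff by blast

lemma row_in_C: "x < length M \<Longrightarrow> M ! x \<in> C"
  using set_rows nth_mem by blast

lemma row_less_row_iff: "i < length M \<Longrightarrow> j < length M \<Longrightarrow> M ! i < M ! j \<longleftrightarrow> i < j"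
  by (rule sorted_wrt_less_nth_less_iff[OF sorted_rows])

lemma conjugate_is_row:
  assumes "u \<in> C" obtains x where "x < length M" "u = M ! x"
  using assms set_rows by (metis in_set_conv_nth)

lemma last_antimono: "u \<in> C \<Longrightarrow> v \<in> C \<Longrightarrow> u \<le> v \<Longrightarrow> last v \<le> last u"
proof -
  assume "u \<in> C" "v \<in> C" "u \<le> v"
  then obtain i j where ij: "i < length M" "j < length M" "u = M ! i" "v = M ! j" "i \<le> j"
    using row_less_row_iff by (metis conjugate_is_row nless_le not_le)
  moreover have "sorted_wrt (\<ge>) (map last M)"
    using perfectly_clustering unfolding perfectly_clustering_def bw_def by simp
  ultimately show ?thesis
    by (metis dual_order.refl length_map nless_le nth_map sorted_wrt_nth_less)
qed

definition rank :: "'a list \<Rightarrow> nat" where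
  "rank u = card {v \<in> C. v < u}"

lemma rank_row: "x < length M \<Longrightarrow> rank (M ! x) = x"
proof -
  assume x: "x < length M"
  have "{v \<in> C. v < M ! x} = (!) M ` {..<x}"
    using x row_less_row_iff row_in_C by (auto elim!: conjugate_is_row)
  moreover have "inj_on ((!) M) {..<x}"
    using distinct_rows x by (auto simp: inj_on_def nth_eq_iff_index_eq)
  ultimately show ?thesis unfolding rank_def by (simp add: card_image)
qed

lemma row_rank: "u \<in> C \<Longrightarrow> rank u < length M \<and> M ! rank u = u"
  by (metis conjugate_is_row rank_row)

lemma mset_last_column: "image_mset last (mset M) = image_mset hd (mset M)"
proof -
  have M: "mset M = mset_set C"
    using mset_set_set[OF distinct_rows] set_rows by simp
  have "image_mset last (mset_set C) = image_mset last (image_mset rotate1 (mset_set C))"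
    using image_mset_mset_set[of rotate1 C] inj_rotate1 rotate1_image_C
    by (simp add: inj_on_subset[OF inj_rotate1])
  also have "\<dots> = image_mset hd (mset_set C)"
    unfolding image_mset.compositionality comp_def
    using finite_C by (intro image_mset_cong) (simp add: last_rotate1 conjugate_not_Nil)
  finally show ?thesis using M by simp
qed

lemma last_column_rev: "rev (map last M) = map hd M"
proof -
  have "sorted (map hd M)"
    using strict_sorted_imp_sorted[OF sorted_rows] row_in_C conjugate_not_Nil
    by (auto simp: sorted_iff_nth_mono intro!: hd_le_hd_if_le)
  moreover have "sorted (rev (map last M))"
    using perfectly_clustering unfolding perfectly_clustering_def bw_def
    by (simp add: sorted_wrt_rev)
  moreover have "mset (rev (map last M)) = mset (map hd M)"
    using mset_last_column by simp
  ultimately show ?thesis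
    by (metis properties_for_sort sorted_sort_id)
qed

lemma hd_mirror_row: "x < length M \<Longrightarrow> hd (M ! (length M - 1 - x)) = last (M ! x)"
  using arg_cong[OF last_column_rev, of "\<lambda>xs. xs ! (length M - 1 - x)"]
  by (simp add: rev_nth)

lemma rank_by_hd:
  assumes v: "v \<in> C"
  shows "rank v = card {u \<in> C. hd u < hd v} + card {u \<in> C. hd u = hd v \<and> u < v}"
proof -
  have "u < v \<longleftrightarrow> hd u < hd v \<or> hd u = hd v \<and> u < v" if "u \<in> C" for u
    using hd_le_hd_if_le[of u v] less_if_hd_less[of u v] conjugate_not_Nil that v
    by (metis order.strict_implies_order order_le_less)
  then have split: "{u \<in> C. u < v} = {u \<in> C. hd u < hd v} \<union> {u \<in> C. hd u = hd v \<and> u < v}"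
    by blast
  show ?thesis
    unfolding rank_def split by (rule card_Un_disjoint) (use finite_C in auto)
qed

lemma rank_by_last:
  assumes v: "v \<in> C"
  shows "rank v = card {u \<in> C. last v < last u} + card {u \<in> C. last u = last v \<and> u < v}"
proof -
  have "u < v \<longleftrightarrow> last v < last u \<or> last u = last v \<and> u < v" if "u \<in> C" for u
    using last_antimono[OF that v] last_antimono[OF v that]
    by (metis order.strict_implies_order order_le_less not_le)
  then have split: "{u \<in> C. u < v} = {u \<in> C. last v < last u} \<union> {u \<in> C. last u = last v \<and> u < v}"
    by blast
  show ?thesis
    unfolding rank_def split by (rule card_Un_disjoint) (use finite_C in auto)
qed

lemma card_less_rotate1:
  assumes v: "v \<in> C"
  shows "card {u \<in> C. last u = hd v \<and> u < rotate1 v} = card {u \<in> C. hd u = hd v \<and> u < v}"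
proof -
  have less_iff: "rotate1 u < rotate1 v \<longleftrightarrow> u < v" if "u \<in> C" "hd u = hd v" for u
    using that v by (simp add: rotate1_less_rotate1_iff conjugate_not_Nil length_conjugate)
  have "{u \<in> C. last u = hd v \<and> u < rotate1 v} = rotate1 ` {u \<in> C. hd u = hd v \<and> u < v}"
  proof
    show "{u \<in> C. last u = hd v \<and> u < rotate1 v} \<subseteq> rotate1 ` {u \<in> C. hd u = hd v \<and> u < v}"
    proof
      fix u' assume u': "u' \<in> {u \<in> C. last u = hd v \<and> u < rotate1 v}"
      then obtain u where "u \<in> C" "u' = rotate1 u"
        using rotate1_image_C by blast
      with u' less_iff show "u' \<in> rotate1 ` {u \<in> C. hd u = hd v \<and> u < v}"
        by (auto simp: last_rotate1 conjugate_not_Nil)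
    qed
  qed (use less_iff rotate1_in_C in \<open>auto simp: last_rotate1 conjugate_not_Nil\<close>)
  then show ?thesis
    by (simp add: card_image inj_on_subset[OF inj_rotate1])
qed

text \<open>The LF-mapping step, with \<open>n = length M\<close>: if \<open>rotate1 v\<close> is row \<open>x\<close>, then \<open>rotate1\<close>
  maps row \<open>n - 1 - x\<close> to row \<open>n - 1 - rank v\<close>.\<close>
lemma rank_rotate1_mirror:
  assumes v: "v \<in> C"
  shows "rank v + rank (rotate1 (M ! (length M - 1 - rank (rotate1 v)))) = length M - 1"
proof -
  define u where "u = rotate1 v"
  define u' where "u' = M ! (length M - 1 - rank u)"
  have u: "u \<in> C" "rank u < length M" "M ! rank u = u"
    using rotate1_in_C[OF v] row_rank u_def by auto
  have u': "u' \<in> C" "rank u' = length M - 1 - rank u"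
    using u row_in_C rank_row u'_def by auto
  have last_u: "last u = hd v"
    using v u_def by (simp add: last_rotate1 conjugate_not_Nil)
  have hd_u': "hd u' = hd v"
    using hd_mirror_row[OF u(2)] u(3) last_u u'_def by simp
  have "rank v = card {x \<in> C. hd x < hd v} + card {x \<in> C. last x = hd v \<and> x < u}"
    using rank_by_hd[OF v] card_less_rotate1[OF v] u_def by simp
  moreover have
    "rank (rotate1 u') = card {x \<in> C. hd v < last x} + card {x \<in> C. hd x = hd v \<and> x < u'}"
    using rank_by_last[OF rotate1_in_C[OF u'(1)]] card_less_rotate1[OF u'(1)] hd_u'
    by (simp add: last_rotate1 conjugate_not_Nil u'(1))
  moreover have "rank u = card {x \<in> C. hd v < last x} + card {x \<in> C. last x = hd v \<and> x < u}"
    using rank_by_last[OF u(1)] last_u by simp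
  moreover have "rank u' = card {x \<in> C. hd x < hd v} + card {x \<in> C. hd x = hd v \<and> x < u'}"
    using rank_by_hd[OF u'(1)] hd_u' by simp
  ultimately have "rank v + rank (rotate1 u') = length M - 1"
    using u(2) u'(2) by linarith
  then show ?thesis unfolding u'_def u_def .
qed

lemma row_mirror_nth:
  "t < length w \<Longrightarrow> x < length M \<Longrightarrow> M ! (length M - 1 - x) ! t = M ! x ! (length w - 1 - t)"
proof (induction t arbitrary: x)
  case 0
  have "M ! (length M - 1 - x) \<in> C" "M ! x \<in> C"
    using row_in_C 0 by auto
  then show ?case
    using hd_mirror_row[OF 0(2)] w_not_Nil
    by (simp add: hd_conv_nth last_conv_nth conjugate_not_Nil length_conjugate)
next
  case (Suc t)
  obtain v where v: "v \<in> C" "M ! x = rotate1 v"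
    using rotate1_image_C row_in_C[OF Suc.prems(2)] by (metis imageE)
  define y where "y = rank v"
  have y: "y < length M" "M ! y = v"
    using row_rank[OF v(1)] y_def by auto
  have "rank (rotate1 v) = x"
    using rank_row[OF Suc.prems(2)] v(2) by simp
  then have "rank (rotate1 (M ! (length M - 1 - x))) = length M - 1 - y"
    using rank_rotate1_mirror[OF v(1)] y_def by simp
  then have mirror_y: "rotate1 (M ! (length M - 1 - x)) = M ! (length M - 1 - y)"
    using row_rank[OF rotate1_in_C[OF row_in_C[of "length M - 1 - x"]]] Suc.prems(2) by simp
  have len: "length (M ! (length M - 1 - x)) = length w" "length v = length w"
    using row_in_C Suc.prems(2) length_conjugate v(1) by auto
  have "M ! (length M - 1 - x) ! Suc t = rotate1 (M ! (length M - 1 - x)) ! t"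
    using Suc.prems(1) len by (simp add: nth_rotate1)
  also have "\<dots> = M ! y ! (length w - 1 - t)"
    using Suc y mirror_y by simp
  also have "\<dots> = rotate1 v ! (length w - 1 - Suc t)"
    using Suc.prems(1) len y by (simp add: nth_rotate1 Suc_diff_Suc)
  finally show ?case using v(2) by simp
qed

lemma rev_row: "x < length M \<Longrightarrow> rev (M ! x) = M ! (length M - 1 - x)"
  using row_mirror_nth row_in_C length_conjugate
  by (intro nth_equalityI) (auto simp: rev_nth)

lemma rev_in_C: "u \<in> C \<Longrightarrow> rev u \<in> C"
  by (elim conjugate_is_row) (simp add: rev_row row_in_C)

lemma rev_less_rev: "u \<in> C \<Longrightarrow> v \<in> C \<Longrightarrow> u < v \<Longrightarrow> rev v < rev u"
  by (elim conjugate_is_row) (auto simp: rev_row row_less_row_iff)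

definition consecutive :: "'a list \<Rightarrow> 'a list \<Rightarrow> bool" where
  "consecutive u v \<longleftrightarrow> u \<in> C \<and> v \<in> C \<and> u < v \<and> (\<forall>z \<in> C. \<not> (u < z \<and> z < v))"

lemma consecutive_rows: "Suc j < length M \<Longrightarrow> consecutive (M ! j) (M ! Suc j)"
  unfolding consecutive_def
  by (auto simp: row_in_C row_less_row_iff elim!: conjugate_is_row)

lemma consecutive_rev: "consecutive u v \<Longrightarrow> consecutive (rev v) (rev u)"
  unfolding consecutive_def by (metis rev_in_C rev_less_rev rev_rev_ident)

lemma consecutive_unique: "consecutive u v \<Longrightarrow> consecutive u v' \<Longrightarrow> v = v'"
  unfolding consecutive_def by (metis linorder_neqE)

text \<open>Perfect clustering, extended from last letters to suffixes.\<close>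
lemma suffix_if_between:
  "u \<in> C \<Longrightarrow> z \<in> C \<Longrightarrow> v \<in> C \<Longrightarrow> u \<le> z \<Longrightarrow> z \<le> v \<Longrightarrow>
    suffix x u \<Longrightarrow> suffix x v \<Longrightarrow> suffix x z"
proof (induction x arbitrary: u z v rule: rev_induct)
  case (snoc c x)
  then obtain u0 v0 where u: "u = u0 @ [c]" and v: "v = v0 @ [c]"
    by (auto simp: suffix_def)
  have "last z = c"
    using last_antimono[OF snoc.prems(1,2,4)] last_antimono[OF snoc.prems(2,3,5)] u v by simp
  then obtain z0 where z: "z = z0 @ [c]"
    using conjugate_not_Nil[OF snoc.prems(2)] by (metis append_butlast_last_id)
  have len: "length u0 = length z0" "length z0 = length v0"
    using length_conjugate[OF snoc.prems(1)] length_conjugate[OF snoc.prems(2)]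
      length_conjugate[OF snoc.prems(3)] u v z by auto
  have "c # u0 \<le> c # z0" "c # z0 \<le> c # v0"
    using snoc.prems(4,5) u v z len by (auto simp: append_le_append_same_length_iff)
  moreover have "c # u0 \<in> C" "c # z0 \<in> C" "c # v0 \<in> C"
    using snoc.prems(1-3) u v z swap_in_C[of _ "[c]"] by auto
  moreover have "suffix x (c # u0)" "suffix x (c # v0)"
    using snoc.prems(6,7) u v by (auto simp: suffix_def)
  ultimately have "suffix x (c # z0)"
    using snoc.IH by blast
  moreover have "length x \<le> length z0"
    using snoc.prems(6) u len by (auto dest: suffix_length_le)
  ultimately show ?case
    using z by (auto simp: suffix_Cons)
qed simp

lemma consecutive_swap_iff:
  assumes len: "length y1 = length y2"
  shows "consecutive (x @ y1) (x @ y2) \<longleftrightarrow> consecutive (y1 @ x) (y2 @ x)"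
proof -
  have less_iff: "x @ y1 < x @ y2 \<longleftrightarrow> y1 @ x < y2 @ x"
    using len by (simp add: append_less_append_same_length_iff append_less_append_cancel_left)
  have C_iff: "x @ y1 \<in> C \<and> x @ y2 \<in> C \<longleftrightarrow> y1 @ x \<in> C \<and> y2 @ x \<in> C"
    using swap_in_C by blast
  have between_iff: "(\<exists>z\<in>C. x @ y1 < z \<and> z < x @ y2) \<longleftrightarrow> (\<exists>z\<in>C. y1 @ x < z \<and> z < y2 @ x)"
    if C1: "y1 @ x \<in> C" and C2: "y2 @ x \<in> C"
  proof
    assume "\<exists>z\<in>C. x @ y1 < z \<and> z < x @ y2"
    then obtain z0 where z0: "x @ z0 \<in> C" "x @ y1 < x @ z0" "x @ z0 < x @ y2"
      using prefix_if_between by (metis less_imp_le prefix_def)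
    have "length z0 = length y1" "length z0 = length y2"
      using length_conjugate[OF z0(1)] length_conjugate[OF C1] len by auto
    with z0 show "\<exists>z\<in>C. y1 @ x < z \<and> z < y2 @ x"
      using swap_in_C[OF z0(1)]
      by (metis append_less_append_same_length_iff append_less_append_cancel_left)
  next
    assume "\<exists>z\<in>C. y1 @ x < z \<and> z < y2 @ x"
    then obtain z where z: "z \<in> C" "y1 @ x < z" "z < y2 @ x"
      by blast
    then have "suffix x z"
      using suffix_if_between[OF C1 z(1) C2] by (auto simp: suffix_def)
    with z obtain z0 where z0: "z0 @ x \<in> C" "y1 @ x < z0 @ x" "z0 @ x < y2 @ x"
      by (auto simp: suffix_def)
    have "length z0 = length y1" "length z0 = length y2"
      using length_conjugate[OF z0(1)] length_conjugate[OF C1] len by auto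
    with z0 show "\<exists>z\<in>C. x @ y1 < z \<and> z < x @ y2"
      using swap_in_C[OF z0(1)]
      by (metis append_less_append_same_length_iff append_less_append_cancel_left)
  qed
  show ?thesis
    unfolding consecutive_def using less_iff C_iff between_iff by blast
qed

lemma consecutive_succ_le: "consecutive u v \<Longrightarrow> z \<in> C \<Longrightarrow> u < z \<Longrightarrow> v \<le> z"
  unfolding consecutive_def by (meson not_le)

lemma le_consecutive_pred: "consecutive u v \<Longrightarrow> z \<in> C \<Longrightarrow> z < v \<Longrightarrow> z \<le> u"
  unfolding consecutive_def by (meson not_le)

text \<open>Letters are indexed from \<open>0\<close>: \<open>letter i\<close> is the paper's \<open>a\<^sub>i\<^sub>+\<^sub>1\<close>, and below
  \<open>ps ! i\<close> is \<open>\<pi>\<^sub>i\<^sub>+\<^sub>1\<close>.\<close>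
definition letter :: "nat \<Rightarrow> 'a" where
  "letter i = sorted_list_of_set (set w) ! i"

lemma letter_less_letter_iff:
  "i < card (set w) \<Longrightarrow> j < card (set w) \<Longrightarrow> letter i < letter j \<longleftrightarrow> i < j"
  unfolding letter_def by (simp add: sorted_wrt_less_nth_less_iff)

lemma letter_inj: "i < card (set w) \<Longrightarrow> j < card (set w) \<Longrightarrow> letter i = letter j \<Longrightarrow> i = j"
  by (metis letter_less_letter_iff linorder_neqE_nat order_less_irrefl)

lemma letter_in_set: "i < card (set w) \<Longrightarrow> letter i \<in> set w"
  unfolding letter_def
  by (metis length_sorted_list_of_set nth_mem set_sorted_list_of_set finite_set)

lemma ex_letter: "c \<in> set w \<Longrightarrow> \<exists>i < card (set w). letter i = c"
  unfolding letter_def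
  by (metis in_set_conv_nth length_sorted_list_of_set set_sorted_list_of_set finite_set)

lemma letter_between:
  assumes "Suc i < card (set w)" "c \<in> set w" "letter i \<le> c" "c \<le> letter (Suc i)"
  shows "c = letter i \<or> c = letter (Suc i)"
proof -
  obtain j where "j < card (set w)" "letter j = c"
    using ex_letter assms(2) by blast
  with assms have "i \<le> j" "j \<le> Suc i"
    using letter_less_letter_iff[of j i] letter_less_letter_iff[of "Suc i" j] by auto
  then show ?thesis
    using \<open>letter j = c\<close> le_Suc_eq by auto
qed

definition first_row :: "'a \<Rightarrow> 'a list" where
  "first_row c = Min {u \<in> C. hd u = c}"

definition last_row :: "'a \<Rightarrow> 'a list" where
  "last_row c = Max {u \<in> C. hd u = c}"

lemma first_row:
  assumes "c \<in> set w"
  shows "first_row c \<in> C" "hd (first_row c) = c" "\<And>u. u \<in> C \<Longrightarrow> hd u = c \<Longrightarrow> first_row c \<le> u"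
proof -
  have "first_row c \<in> {u \<in> C. hd u = c}"
    unfolding first_row_def using exists_conjugate_with_hd[OF assms] finite_C by (intro Min_in) auto
  then show "first_row c \<in> C" "hd (first_row c) = c" by auto
  show "\<And>u. u \<in> C \<Longrightarrow> hd u = c \<Longrightarrow> first_row c \<le> u"
    unfolding first_row_def using finite_C by (intro Min_le) auto
qed

lemma last_row:
  assumes "c \<in> set w"
  shows "last_row c \<in> C" "hd (last_row c) = c" "\<And>u. u \<in> C \<Longrightarrow> hd u = c \<Longrightarrow> u \<le> last_row c"
proof -
  have "last_row c \<in> {u \<in> C. hd u = c}"
    unfolding last_row_def using exists_conjugate_with_hd[OF assms] finite_C by (intro Max_in) auto
  then show "last_row c \<in> C" "hd (last_row c) = c" by auto
  show "\<And>u. u \<in> C \<Longrightarrow> hd u = c \<Longrightarrow> u \<le> last_row c"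
    unfolding last_row_def using finite_C by (intro Max_ge) auto
qed

lemma conjugate_less_if_hd_less: "u \<in> C \<Longrightarrow> v \<in> C \<Longrightarrow> hd u < hd v \<Longrightarrow> u < v"
  by (simp add: less_if_hd_less conjugate_not_Nil)

lemma consecutive_last_row_first_row:
  assumes i: "Suc i < card (set w)"
  shows "consecutive (last_row (letter i)) (first_row (letter (Suc i)))"
proof -
  note upper = last_row[OF letter_in_set[OF Suc_lessD[OF i]]]
  note lower = first_row[OF letter_in_set[OF i]]
  have "\<not> (last_row (letter i) < z \<and> z < first_row (letter (Suc i)))" if z: "z \<in> C" for z
  proof
    assume between: "last_row (letter i) < z \<and> z < first_row (letter (Suc i))"
    then have "letter i \<le> hd z" "hd z \<le> letter (Suc i)"
      using hd_le_hd_if_le conjugate_not_Nil z upper(1,2) lower(1,2) by (metis less_imp_le)+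
    then have "hd z = letter i \<or> hd z = letter (Suc i)"
      using letter_between[OF i] hd_in_set[OF conjugate_not_Nil[OF z]] set_conjugate[OF z] by simp
    then show False
      using upper(3)[OF z] lower(3)[OF z] between by auto
  qed
  moreover have "last_row (letter i) < first_row (letter (Suc i))"
    using conjugate_less_if_hd_less upper(1,2) lower(1,2) letter_less_letter_iff i by simp
  ultimately show ?thesis
    unfolding consecutive_def using upper(1) lower(1) by blast
qed

lemma consecutive_hd_neq:
  assumes uv: "consecutive u v" and "hd u \<noteq> hd v"
  obtains i where "Suc i < card (set w)" "u = last_row (letter i)" "v = first_row (letter (Suc i))"
proof -
  have u: "u \<in> C" and v: "v \<in> C" and "u < v"
    using uv unfolding consecutive_def by auto
  then have "hd u < hd v"
    using hd_le_hd_if_le conjugate_not_Nil \<open>hd u \<noteq> hd v\<close> by (metis less_imp_le order_le_neq_trans)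
  obtain i j where i: "i < card (set w)" "letter i = hd u"
    and j: "j < card (set w)" "letter j = hd v"
    using ex_letter set_conjugate conjugate_not_Nil u v by (metis hd_in_set)
  have "i < j"
    using \<open>hd u < hd v\<close> i j letter_less_letter_iff by metis
  have j_eq: "j = Suc i"
  proof (rule ccontr)
    assume "j \<noteq> Suc i"
    with \<open>i < j\<close> j have "Suc i < j" "Suc i < card (set w)"
      by auto
    then have hd_less: "letter (Suc i) < hd v"
      using letter_less_letter_iff[of "Suc i" j] j by simp
    note z = first_row[OF letter_in_set[OF \<open>Suc i < card (set w)\<close>]]
    have "hd u < letter (Suc i)"
      using letter_less_letter_iff[of i "Suc i"] i \<open>Suc i < card (set w)\<close> by simp
    then have "u < first_row (letter (Suc i))"
      using conjugate_less_if_hd_less u z(1,2) by simp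
    then have "v \<le> first_row (letter (Suc i))"
      using consecutive_succ_le[OF uv] z(1) by blast
    then show False
      using hd_le_hd_if_le conjugate_not_Nil v z(1,2) hd_less by (metis leD)
  qed
  note upper = last_row[OF letter_in_set[OF i(1)]]
  note lower = first_row[OF letter_in_set[OF j(1)]]
  have "u = last_row (letter i)"
    using upper le_consecutive_pred[OF uv] conjugate_less_if_hd_less v \<open>hd u < hd v\<close> u i
    by (metis order.antisym)
  moreover have "v = first_row (letter j)"
    using lower consecutive_succ_le[OF uv] conjugate_less_if_hd_less u \<open>hd u < hd v\<close> v j
    by (metis order.antisym)
  ultimately show thesis
    using that j(1) j_eq by blast
qed

lemma card_consecutive_le: "card {u. \<exists>v. consecutive u v} \<le> length w - 1"
proof -
  have "{u. \<exists>v. consecutive u v} \<subseteq> C - {Max C}"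
    unfolding consecutive_def using Max_ge[OF finite_C] by (auto dest: order.strict_trans2)
  then have "card {u. \<exists>v. consecutive u v} \<le> card (C - {Max C})"
    using finite_C by (intro card_mono) auto
  also have "\<dots> = card C - 1"
    using Max_in[OF finite_C] w_in_C by (metis card_Diff_singleton empty_iff)
  finally show ?thesis
    using card_C_le by linarith
qed

abbreviation upper :: "nat \<Rightarrow> 'a list" where
  "upper i \<equiv> last_row (letter i)"

abbreviation lower :: "nat \<Rightarrow> 'a list" where
  "lower i \<equiv> first_row (letter (Suc i))"

lemma consecutive_boundary_rotation:
  assumes "Suc i < card (set w)" "upper i = y1 @ x" "lower i = y2 @ x"
  shows "consecutive (x @ y1) (x @ y2)"
proof -
  have cons: "consecutive (y1 @ x) (y2 @ x)"
    using consecutive_last_row_first_row[OF assms(1)] assms(2,3) by simp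
  then have "y1 @ x \<in> C" "y2 @ x \<in> C"
    unfolding consecutive_def by simp_all
  then have "length y1 = length y2"
    using length_conjugate by (metis add_right_cancel length_append)
  with cons show ?thesis
    using consecutive_swap_iff by blast
qed

lemma boundary_rotation_inj:
  assumes i: "Suc i < card (set w)" "upper i = y1 @ x" "lower i = y2 @ x"
    and i': "Suc i' < card (set w)" "upper i' = y1' @ x'" "lower i' = y2' @ x'"
    and eq: "x @ y1 = x' @ y1'"
  shows "i = i' \<and> x = x'"
proof -
  have "consecutive (x @ y1) (x' @ y2')"
    using consecutive_boundary_rotation[OF i'] eq by simp
  then have eq2: "x @ y2 = x' @ y2'"
    by (rule consecutive_unique[OF consecutive_boundary_rotation[OF i]])
  have not_shorter: "\<not> length a < length b"
    if "Suc j < card (set w)" "upper j = p1 @ a" "lower j = p2 @ a"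
      and "a @ p1 = b @ q1" "a @ p2 = b @ q2"
    for j a b p1 p2 q1 q2
  proof
    assume "length a < length b"
    with that(4) obtain us where "b = a @ us" "p1 = us @ q1" "us \<noteq> []"
      by (auto simp: append_eq_append_conv2)
    with that(5) have "p2 = us @ q2"
      by simp
    have "hd (upper j) = hd us" "hd (lower j) = hd us"
      using that(2,3) \<open>p1 = us @ q1\<close> \<open>p2 = us @ q2\<close> \<open>us \<noteq> []\<close> by simp_all
    then have "letter j = letter (Suc j)"
      using last_row(2)[OF letter_in_set[OF Suc_lessD[OF that(1)]]]
        first_row(2)[OF letter_in_set[OF that(1)]] by simp
    then show False
      using letter_less_letter_iff[of j "Suc j"] that(1) by simp
  qed
  have "length x = length x'"
    using not_shorter[OF i eq eq2] not_shorter[OF i' eq[symmetric] eq2[symmetric]] by linarith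
  with eq have "x = x'" "y1 = y1'"
    by auto
  then have "upper i = upper i'"
    using i(2) i'(2) by simp
  have "letter i = hd (upper i)"
    using last_row(2)[OF letter_in_set[OF Suc_lessD[OF i(1)]]] by simp
  also have "\<dots> = letter i'"
    using last_row(2)[OF letter_in_set[OF Suc_lessD[OF i'(1)]]] \<open>upper i = upper i'\<close> by simp
  finally show ?thesis
    using letter_inj[OF Suc_lessD[OF i(1)] Suc_lessD[OF i'(1)]] \<open>x = x'\<close> by simp
qed

definition boundary_suffixes :: "(nat \<times> 'a list) set" where
  "boundary_suffixes = {(i, x). Suc i < card (set w) \<and> suffix x (upper i) \<and> suffix x (lower i)}"

text \<open>Rotating a pair of boundary rows along a common suffix gives a pair of consecutive rows, and
  distinct common suffixes give distinct upper rows.\<close>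
lemma boundary_suffixes_bound:
  shows "finite boundary_suffixes" "card boundary_suffixes \<le> length w - 1"
proof -
  define rot where "rot = (\<lambda>(i, x). x @ take (length w - length x) (upper i))"
  have rot: "rot (i, x) = x @ y1" if "Suc i < card (set w)" "upper i = y1 @ x" for i x y1
  proof -
    have "upper i \<in> C"
      using last_row(1)[OF letter_in_set[OF Suc_lessD[OF that(1)]]] .
    then have "length (y1 @ x) = length w"
      using length_conjugate[OF \<open>upper i \<in> C\<close>] that(2) by simp
    then show ?thesis
      using that(2) unfolding rot_def by simp
  qed
  have split: "\<exists>y1 y2. Suc i < card (set w) \<and> upper i = y1 @ x \<and> lower i = y2 @ x"
    if "(i, x) \<in> boundary_suffixes" for i x
    using that unfolding boundary_suffixes_def suffix_def by blast
  have sub: "rot ` boundary_suffixes \<subseteq> {u. \<exists>v. consecutive u v}"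
  proof
    fix u assume "u \<in> rot ` boundary_suffixes"
    then obtain i x where "(i, x) \<in> boundary_suffixes" and u: "u = rot (i, x)"
      by auto
    with split obtain y1 y2 where i: "Suc i < card (set w)" "upper i = y1 @ x" "lower i = y2 @ x"
      by blast
    then have "consecutive u (x @ y2)"
      using consecutive_boundary_rotation[OF i] rot[OF i(1,2)] u by simp
    then show "u \<in> {u. \<exists>v. consecutive u v}"
      by blast
  qed
  have inj: "inj_on rot boundary_suffixes"
  proof (rule inj_onI)
    fix p q assume pq: "p \<in> boundary_suffixes" "q \<in> boundary_suffixes" "rot p = rot q"
    obtain i x i' x' where p: "p = (i, x)" and q: "q = (i', x')"
      by fastforce
    obtain y1 y2 where a: "Suc i < card (set w)" "upper i = y1 @ x" "lower i = y2 @ x"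
      using split pq(1) p by blast
    obtain y1' y2' where b: "Suc i' < card (set w)" "upper i' = y1' @ x'" "lower i' = y2' @ x'"
      using split pq(2) q by blast
    have "x @ y1 = x' @ y1'"
      using pq(3) p q rot[OF a(1,2)] rot[OF b(1,2)] by simp
    then show "p = q"
      using boundary_rotation_inj[OF a b] p q by simp
  qed
  have fin: "finite {u. \<exists>v. consecutive u v}"
    using finite_C by (rule rev_finite_subset) (auto simp: consecutive_def)
  show "card boundary_suffixes \<le> length w - 1"
    using card_inj_on_le[OF inj sub fin] card_consecutive_le by linarith
  show "finite boundary_suffixes"
    using inj sub fin by (meson finite_imageD finite_subset)
qed

end

locale palindromic_factorization = perfectly_clustering_word +
  fixes l :: "'a list" and ps :: "'a list list"
  assumes l_in_C: "l \<in> conjugates w"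
    and factorization: "palindromic_special_factorization l ps"
begin

lemma Suc_length_ps: "Suc (length ps) = card (set w)"
  using factorization set_conjugate[OF l_in_C]
  unfolding palindromic_special_factorization_def special_factorization_def by simp

lemma palindrome: "i < length ps \<Longrightarrow> rev (ps ! i) = ps ! i"
  using factorization unfolding palindromic_special_factorization_def by simp

lemma l_eq_interleave: "l = interleave (sorted_list_of_set (set w)) ps"
  using factorization set_conjugate[OF l_in_C]
  unfolding palindromic_special_factorization_def special_factorization_def by simp

lemma sorted_letters_Cons:
  obtains a as where "sorted_list_of_set (set w) = a # as" "length ps = length as"
proof -
  have "length (sorted_list_of_set (set w)) = Suc (length ps)"
    using Suc_length_ps by simp
  then show thesis
    using that by (cases "sorted_list_of_set (set w)") auto
qed

lemma l_infix:
  assumes "Suc i < card (set w)"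
  obtains \<alpha> \<beta> where "l = \<alpha> @ [letter i] @ ps ! i @ [letter (Suc i)] @ \<beta>"
proof -
  obtain a as where as: "sorted_list_of_set (set w) = a # as" "length ps = length as"
    by (rule sorted_letters_Cons)
  then show thesis
    using interleave_infix[OF as(2), of i a] that l_eq_interleave assms Suc_length_ps
    unfolding letter_def by auto
qed

lemma sum_length_ps: "(\<Sum>i<length ps. Suc (length (ps ! i))) = length w - 1"
proof -
  obtain a as where as: "sorted_list_of_set (set w) = a # as" "length ps = length as"
    by (rule sorted_letters_Cons)
  then show ?thesis
    using length_interleave[OF as(2), of a] l_eq_interleave length_conjugate[OF l_in_C] by simp
qed

text \<open>\<open>t @ ps ! i\<close> is the rotation of \<open>l = \<dots> letter i # ps ! i @ letter (Suc i) # \<dots>\<close>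
  ending with \<open>ps ! i\<close>; as \<open>ps ! i\<close> is a palindrome, its mirror image rotates to \<open>rev t @ ps ! i\<close>.\<close>
lemma mirrored_conjugates_ending_with_ps:
  assumes i: "Suc i < card (set w)"
  obtains t where "t @ ps ! i \<in> C" "rev t @ ps ! i \<in> C" "t \<noteq> []"
    "hd t = letter (Suc i)" "last t = letter i"
proof -
  obtain \<alpha> \<beta> where "l = \<alpha> @ [letter i] @ ps ! i @ [letter (Suc i)] @ \<beta>"
    using l_infix[OF i] .
  define t where "t = letter (Suc i) # \<beta> @ \<alpha> @ [letter i]"
  have "(\<alpha> @ [letter i] @ ps ! i) @ (letter (Suc i) # \<beta>) \<in> C"
    using l_in_C \<open>l = _\<close> by simp
  then have t: "t @ ps ! i \<in> C"
    using swap_in_C t_def by fastforce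
  have "ps ! i @ rev t \<in> C"
    using rev_in_C[OF t] palindrome i Suc_length_ps by simp
  then have "rev t @ ps ! i \<in> C"
    by (rule swap_in_C)
  then show thesis
    by (rule that[OF t]) (simp_all add: t_def)
qed

lemma boundary_rows_suffix:
  assumes i: "Suc i < card (set w)"
  obtains z1 z2 where "upper i = z1 @ ps ! i" "lower i = z2 @ ps ! i" "z1 \<noteq> []" "z2 \<noteq> []"
    "letter i \<le> last z2" "last z1 \<le> letter (Suc i)"
proof -
  note up = last_row[OF letter_in_set[OF Suc_lessD[OF i]]]
  note lo = first_row[OF letter_in_set[OF i]]
  obtain t where t: "t @ ps ! i \<in> C" "rev t @ ps ! i \<in> C" "t \<noteq> []"
    "hd t = letter (Suc i)" "last t = letter i"
    by (rule mirrored_conjugates_ending_with_ps[OF i])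
  have le_up: "rev t @ ps ! i \<le> upper i"
    using up(3)[OF t(2)] t(3,5) by (simp add: hd_rev)
  have lo_le: "lower i \<le> t @ ps ! i"
    using lo(3)[OF t(1)] t(3,4) by simp
  have up_lo: "upper i < lower i"
    using consecutive_last_row_first_row[OF i] unfolding consecutive_def by simp
  obtain z1 z2 where z: "upper i = z1 @ ps ! i" "lower i = z2 @ ps ! i"
    using suffix_if_between[OF t(2) up(1) t(1)] suffix_if_between[OF t(2) lo(1) t(1)]
      le_up lo_le up_lo by (fastforce simp: suffix_def)
  have len: "length z1 = length t" "length z2 = length t"
    using length_conjugate t(1) up(1) lo(1) z by (metis length_append add_right_cancel)+
  then have ne: "z1 \<noteq> []" "z2 \<noteq> []"
    using t(3) by auto
  have "rev t @ ps ! i \<le> z1 @ ps ! i"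
    using le_up z by simp
  then have "rev t \<le> z1"
    using len by (subst (asm) append_le_append_same_length_iff) auto
  then have "last (ps ! i @ z1) \<le> last (ps ! i @ rev t)"
    using swap_in_C t(2) up(1) z by (intro last_antimono) (auto simp: append_le_append_cancel_left)
  then have "last z1 \<le> letter (Suc i)"
    using t(3,4) ne by (simp add: last_rev)
  moreover have "z2 @ ps ! i \<le> t @ ps ! i"
    using lo_le z by simp
  then have "z2 \<le> t"
    using len by (subst (asm) append_le_append_same_length_iff) auto
  then have "last (ps ! i @ t) \<le> last (ps ! i @ z2)"
    using swap_in_C t(1) lo(1) z by (intro last_antimono) (auto simp: append_le_append_cancel_left)
  then have "letter i \<le> last z2"
    using t(3,5) ne by simp
  ultimately show thesis
    using that z ne by simp
qed

text \<open>The suffixes of the factors \<open>ps ! i\<close> alone are already \<open>length w - 1\<close> boundary suffixes.\<close>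
lemma common_suffix_boundary_rows:
  assumes i0: "Suc i0 < card (set w)" and x0: "suffix x0 (upper i0)" "suffix x0 (lower i0)"
  shows "length x0 \<le> length (ps ! i0)"
proof (rule ccontr)
  assume long: "\<not> length x0 \<le> length (ps ! i0)"
  define S where "S = Sigma {..<length ps} (\<lambda>i. set (suffixes (ps ! i)))"
  have "S \<subseteq> boundary_suffixes"
  proof
    fix p assume "p \<in> S"
    then obtain i x where p: "p = (i, x)" "i < length ps" "suffix x (ps ! i)"
      unfolding S_def by auto
    then have "Suc i < card (set w)"
      using Suc_length_ps by simp
    then obtain z1 z2 where "upper i = z1 @ ps ! i" "lower i = z2 @ ps ! i"
      by (rule boundary_rows_suffix)
    with p \<open>Suc i < card (set w)\<close> show "p \<in> boundary_suffixes"
      unfolding boundary_suffixes_def by (simp add: suffix_appendI)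
  qed
  moreover have "(i0, x0) \<in> boundary_suffixes" "(i0, x0) \<notin> S"
    using i0 x0 long suffix_length_le unfolding boundary_suffixes_def S_def by auto
  ultimately have "card (insert (i0, x0) S) \<le> card boundary_suffixes"
    using boundary_suffixes_bound(1) by (intro card_mono) auto
  moreover have "card (insert (i0, x0) S) = length w"
    unfolding S_def using \<open>(i0, x0) \<notin> S\<close> sum_length_ps w_not_Nil
    by (simp add: card_SigmaI S_def)
  moreover have "0 < length w"
    using w_not_Nil by simp
  ultimately show False
    using boundary_suffixes_bound(2) by linarith
qed

lemma boundary_rows_last_letters:
  assumes i: "Suc i < card (set w)"
  obtains z1 z2 where "upper i = z1 @ ps ! i" "lower i = z2 @ ps ! i" "z1 \<noteq> []" "z2 \<noteq> []"
    "last z1 = letter (Suc i)" "last z2 = letter i"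
proof -
  obtain z1 z2 where z: "upper i = z1 @ ps ! i" "lower i = z2 @ ps ! i" "z1 \<noteq> []" "z2 \<noteq> []"
    "letter i \<le> last z2" "last z1 \<le> letter (Suc i)"
    by (rule boundary_rows_suffix[OF i])
  have cons: "consecutive (ps ! i @ z1) (ps ! i @ z2)"
    using consecutive_boundary_rotation[OF i z(1,2)] .
  then have "last (ps ! i @ z2) \<le> last (ps ! i @ z1)"
    unfolding consecutive_def using last_antimono by (simp add: less_imp_le)
  then have "last z2 \<le> last z1"
    using z(3,4) by simp
  moreover have "last z1 \<noteq> last z2"
  proof
    assume "last z1 = last z2"
    moreover obtain z1' e1 where "z1 = z1' @ [e1]"
      using z(3) by (cases z1 rule: rev_cases) auto
    moreover obtain z2' e2 where "z2 = z2' @ [e2]"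
      using z(4) by (cases z2 rule: rev_cases) auto
    ultimately have "suffix (e1 # ps ! i) (upper i)" "suffix (e1 # ps ! i) (lower i)"
      using z(1,2) by (auto simp: suffix_def)
    from common_suffix_boundary_rows[OF i this] show False
      by simp
  qed
  ultimately have less: "last z2 < last z1"
    by simp
  have "last z1 \<in> set (upper i)" "last z2 \<in> set (lower i)"
    using z(1-4) by simp_all
  then have in_set: "last z1 \<in> set w" "last z2 \<in> set w"
    using set_conjugate[OF last_row(1)[OF letter_in_set[OF Suc_lessD[OF i]]]]
      set_conjugate[OF first_row(1)[OF letter_in_set[OF i]]] by simp_all
  have "last z1 \<noteq> letter i" "letter i \<le> last z1"
    using less z(5) by auto
  then have "last z1 = letter (Suc i)"
    using letter_between[OF i in_set(1) _ z(6)] by blast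
  moreover have "last z2 \<noteq> letter (Suc i)" "last z2 \<le> letter (Suc i)"
    using less z(6) by auto
  then have "last z2 = letter i"
    using letter_between[OF i in_set(2) z(5)] by blast
  ultimately show thesis
    using that z(1-4) by blast
qed

lemma boundary_rows_mirrored:
  assumes i: "Suc i < card (set w)"
  obtains m where "upper i = m @ ps ! i" "lower i = rev m @ ps ! i"
    "hd m = letter i" "last m = letter (Suc i)"
proof -
  obtain z1 z2 where z: "upper i = z1 @ ps ! i" "lower i = z2 @ ps ! i" "z1 \<noteq> []" "z2 \<noteq> []"
    "last z1 = letter (Suc i)" "last z2 = letter i"
    by (rule boundary_rows_last_letters[OF i])
  have "rev (ps ! i) = ps ! i"
    using palindrome i Suc_length_ps by simp
  then have "consecutive (rev z2 @ ps ! i) (rev z1 @ ps ! i)"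
    using consecutive_rev[OF consecutive_boundary_rotation[OF i z(1,2)]] by simp
  moreover have "hd (rev z2 @ ps ! i) \<noteq> hd (rev z1 @ ps ! i)"
    using z(3-6) letter_less_letter_iff[OF Suc_lessD[OF i] i] by (simp add: hd_rev)
  ultimately obtain j where j: "Suc j < card (set w)" "rev z2 @ ps ! i = upper j"
    by (rule consecutive_hd_neq)
  have "letter j = hd (rev z2 @ ps ! i)"
    using last_row(2)[OF letter_in_set[OF Suc_lessD[OF j(1)]]] j(2) by simp
  also have "\<dots> = letter i"
    using z(4,6) by (simp add: hd_rev)
  finally have "j = i"
    using letter_inj[OF Suc_lessD[OF j(1)] Suc_lessD[OF i]] by simp
  then have "rev z2 @ ps ! i = z1 @ ps ! i"
    using j(2) z(1) by simp
  then have "rev z2 = z1"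
    by simp
  moreover have "hd z1 = letter i"
    using last_row(2)[OF letter_in_set[OF Suc_lessD[OF i]]] z(1,3) by simp
  ultimately show thesis
    using that[of z1] z(1,2,5) by auto
qed

lemma consecutive_rows_factorization:
  assumes "Suc j < length M"
  shows "\<exists>x y m. M ! j = y @ m @ x \<and> M ! Suc j = y @ rev m @ x \<and> x @ y \<in> set ps"
proof -
  have cons: "consecutive (M ! j) (M ! Suc j)"
    using consecutive_rows[OF assms] .
  then have len: "length (M ! j) = length (M ! Suc j)" and "M ! j \<noteq> M ! Suc j"
    using length_conjugate unfolding consecutive_def by auto
  then have "M ! j \<parallel> M ! Suc j"
    by (auto simp: parallel_def prefix_def)
  then obtain y b bs c cs where y: "b \<noteq> c" "M ! j = y @ b # bs" "M ! Suc j = y @ c # cs"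
    using parallel_decomp by blast
  have "length (b # bs) = length (c # cs)"
    using len y(2,3) by simp
  from consecutive_swap_iff[OF this, of y] have "consecutive ((b # bs) @ y) ((c # cs) @ y)"
    using cons y(2,3) by simp
  moreover have "hd ((b # bs) @ y) \<noteq> hd ((c # cs) @ y)"
    using y(1) by simp
  ultimately obtain i
    where i: "Suc i < card (set w)" "(b # bs) @ y = upper i" "(c # cs) @ y = lower i"
    by (rule consecutive_hd_neq)
  obtain m where m: "upper i = m @ ps ! i" "lower i = rev m @ ps ! i"
    "hd m = letter i" "last m = letter (Suc i)"
    by (rule boundary_rows_mirrored[OF i(1)])
  have "(b # bs) @ y = m @ ps ! i" "(c # cs) @ y = rev m @ ps ! i"
    using i(2,3) m(1,2) by simp_all
  moreover have "hd m \<noteq> last m"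
    using m(3,4) letter_less_letter_iff[OF Suc_lessD[OF i(1)] i(1)] by simp
  ultimately obtain x where x: "b # bs = m @ x" "c # cs = rev m @ x" "ps ! i = x @ y"
    by (rule split_mirrored_factors)
  have "x @ y \<in> set ps"
    using i(1) Suc_length_ps x(3) by (metis Suc_less_SucD nth_mem)
  then show ?thesis
    using y(2,3) x(1,2) by (intro exI[of _ x] exI[of _ y] exI[of _ m]) simp
qed

end

theorem theorem6p2:
  fixes w l :: "'a::linorder list" and ps :: "'a list list" and j :: nat
  assumes "perfectly_clustering w"
    and "l \<in> conjugates w" and "lyndon l"
    and "palindromic_special_factorization l ps"
    and "Suc j < length (bw_matrix w)"
  shows "\<exists>x y m. bw_matrix w ! j = y @ m @ x \<and> bw_matrix w ! Suc j = y @ rev m @ x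
                 \<and> x @ y \<in> set ps"
proof -
  interpret palindromic_factorization w l ps
    using assms(1,2,4) by unfold_locales
  show ?thesis
    using consecutive_rows_factorization[OF assms(5)] .
qed

end
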